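(* Let $\alpha\in\mathbb C$. For every integer $n\ge1$, the first column $k_n:=K_ne_1$ of $K_n:=A_\alpha^n-T\big((z+z^{-1})^n\big)$ satisfies $$k_n=\sum_{i=0}^{\lfloor (n-1)/2\rfloor}\binom{n}{i}h_{n-2i}.$$
   Context: All matrices are semi-infinite with rows and columns indexed by the positive integers; $e_1$ is the first column of the semi-infinite identity. $T(a)$ denotes the Toeplitz matrix with $(i,j)$ entry $a_{j-i}$ for $a(z)=\sum_{i\in\mathbb Z}a_iz^i$, and $A_\alpha:=T(z+z^{-1})+\alpha e_1e_1^T$ (tridiagonal, ones on sub- and superdiagonal, $(1,1)$ entry $\alpha$, zeros elsewhere). Let $\theta=\alpha^2-1$ and define the polynomials $h_1(z)=\alpha z$ and, for $n\ge 2$, $h_n(z)=\theta\sum_{i=1}^{n-1}\alpha^{n-i-1}z^i+\alpha z^n$. The same symbol $h_n$ denotes the semi-infinite column vector whose $i$-th entry is the coefficient of $z^i$ in $h_n(z)$ ($i\ge1$), padded with zeros. *)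

theory Defs
  imports "HOL-Analysis.Analysis" "HOL-Computational_Algebra.Polynomial"
begin

text \<open>Semi-infinite matrices: rows and columns indexed by positive integers;
  entries at index 0 are ignored. Laurent series coefficients: int \<Rightarrow> complex.\<close>

type_synonym smat = "nat \<Rightarrow> nat \<Rightarrow> complex"

definition smat_mult :: "smat \<Rightarrow> smat \<Rightarrow> smat" (infixl "**\<^sub>s" 70) where
  "smat_mult A B = (\<lambda>i j. infsum (\<lambda>k. A i k * B k j) {1..})"

definition smat_id :: smat where
  "smat_id = (\<lambda>i j. if i = j then 1 else 0)"

fun smat_pow :: "smat \<Rightarrow> nat \<Rightarrow> smat" where
  "smat_pow A 0 = smat_id"
| "smat_pow A (Suc n) = A **\<^sub>s smat_pow A n"

definition toeplitz :: "(int \<Rightarrow> complex) \<Rightarrow> smat" where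
  "toeplitz a = (\<lambda>i j. a (int j - int i))"

text \<open>Coefficients of the Laurent polynomial z + z^{-1}.\<close>
definition zsym :: "int \<Rightarrow> complex" where
  "zsym = (\<lambda>m. if m = 1 \<or> m = -1 then 1 else 0)"

definition laurent_mult :: "(int \<Rightarrow> complex) \<Rightarrow> (int \<Rightarrow> complex) \<Rightarrow> (int \<Rightarrow> complex)" where
  "laurent_mult a b = (\<lambda>m. infsum (\<lambda>k. a k * b (m - k)) UNIV)"

fun zsym_pow :: "nat \<Rightarrow> int \<Rightarrow> complex" where
  "zsym_pow 0 = (\<lambda>m. if m = 0 then 1 else 0)"
| "zsym_pow (Suc n) = laurent_mult zsym (zsym_pow n)"

definition A_mat :: "complex \<Rightarrow> smat" where
  "A_mat \<alpha> = (\<lambda>i j. toeplitz zsym i j + (if i = 1 \<and> j = 1 then \<alpha> else 0))"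

definition K_mat :: "complex \<Rightarrow> nat \<Rightarrow> smat" where
  "K_mat \<alpha> n = (\<lambda>i j. smat_pow (A_mat \<alpha>) n i j - toeplitz (zsym_pow n) i j)"

definition h_poly :: "complex \<Rightarrow> nat \<Rightarrow> complex poly" where
  "h_poly \<alpha> n = (if n = 1 then monom \<alpha> 1
     else smult (\<alpha>^2 - 1) (\<Sum>i = 1..n-1. monom (\<alpha> ^ (n - i - 1)) i) + monom \<alpha> n)"

end

theory Submission
  imports Defs
begin

text \<open>Extend the vectors \<open>h\<^sub>m\<close> to all integers \<open>m\<close> by \<open>h\<^sub>m = e\<^bsub>1-m\<^esub>\<close> for \<open>m \<le> 0\<close>, so that
  \<open>h\<^sub>0 = e\<^sub>1\<close>. Then \<open>A\<^sub>\<alpha> h\<^sub>m = h\<^bsub>m-1\<^esub> + h\<^bsub>m+1\<^esub>\<close> for every \<open>m\<close>: away from the first row this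
  is the shift structure of \<open>T(z + z\<^sup>-\<^sup>1)\<close>, and the coefficients of \<open>h\<^sub>m\<close> are chosen exactly so
  that the corner entry \<open>\<alpha>\<close> is absorbed. Hence \<open>A\<^sub>\<alpha>\<close> acts on the family \<open>(h\<^sub>m)\<close> as
  \<open>S + S\<^sup>-\<^sup>1\<close>, \<open>S\<close> the index shift, and the binomial theorem gives
  \<open>A\<^sub>\<alpha>\<^sup>n e\<^sub>1 = \<Sum>\<^sub>j (n choose j) h\<^bsub>n-2j\<^esub>\<close>. The same computation for the coefficients of
  \<open>(z + z\<^sup>-\<^sup>1)\<^sup>n\<close> shows that \<open>T((z + z\<^sup>-\<^sup>1)\<^sup>n) e\<^sub>1\<close> is the part of this sum with \<open>n - 2j \<le> 0\<close>,
  so \<open>K\<^sub>n e\<^sub>1\<close> is the part with \<open>n - 2j \<ge> 1\<close>, i.e. \<open>j \<le> (n - 1) div 2\<close>.\<close>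

text \<open>\<open>binomial_orbit x n\<close> is \<open>(S + S\<^sup>-\<^sup>1)\<^sup>n x\<close> for the shift \<open>(S x) m = x (m + 1)\<close>.\<close>

definition binomial_orbit :: "(int \<Rightarrow> 'a::semiring_1) \<Rightarrow> nat \<Rightarrow> int \<Rightarrow> 'a" where
  "binomial_orbit x n m = (\<Sum>j = 0..n. of_nat (n choose j) * x (m + int n - 2 * int j))"

lemma binomial_orbit_0 [simp]: "binomial_orbit x 0 m = x m"
  by (simp add: binomial_orbit_def)

lemma binomial_orbit_Suc:
  "binomial_orbit x (Suc n) m = binomial_orbit x n (m - 1) + binomial_orbit x n (m + 1)"
proof -
  define t where "t j = of_nat (n choose j) * x (m + 1 + int n - 2 * int j)" for j
  have "binomial_orbit x n (m + 1) = (\<Sum>j = 0..Suc n. t j)"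
    by (simp add: binomial_orbit_def t_def binomial_eq_0)
  also have "\<dots> = t 0 + (\<Sum>j = 0..n. of_nat (n choose Suc j) * x (m + int n - 1 - 2 * int j))"
    by (subst sum.atLeast0_atMost_Suc_shift) (simp add: t_def algebra_simps)
  finally have "binomial_orbit x n (m - 1) + binomial_orbit x n (m + 1)
      = x (m + int (Suc n)) + (\<Sum>j = 0..n. of_nat (Suc n choose Suc j) * x (m + int n - 1 - 2 * int j))"
    by (simp add: binomial_orbit_def t_def sum.distrib algebra_simps)
  also have "\<dots> = binomial_orbit x (Suc n) m"
    unfolding binomial_orbit_def sum.atLeast0_atMost_Suc_shift by (simp add: algebra_simps)
  finally show ?thesis ..
qed

lemma binomial_orbit_add:
  "binomial_orbit (\<lambda>m. x m + y m) n m = binomial_orbit x n m + binomial_orbit y n m"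
  by (simp add: binomial_orbit_def distrib_left sum.distrib)

lemma binomial_orbit_shift: "binomial_orbit x n (l + c) = binomial_orbit (\<lambda>m. x (m + c)) n l"
  by (simp add: binomial_orbit_def algebra_simps)

lemma laurent_mult_zsym: "laurent_mult zsym b m = b (m - 1) + b (m + 1)"
proof -
  have "laurent_mult zsym b m = (\<Sum>\<^sub>\<infinity>k\<in>{-1, 1}. zsym k * b (m - k))"
    unfolding laurent_mult_def by (rule infsum_cong_neutral) (auto simp: zsym_def)
  then show ?thesis by (simp add: zsym_def)
qed

lemma zsym_pow_eq_binomial_orbit: "zsym_pow n k = binomial_orbit (\<lambda>t. of_bool (t = 0)) n (- k)"
  by (induction n arbitrary: k) (simp_all add: laurent_mult_zsym binomial_orbit_Suc add.commute)

lemma toeplitz_zsym_pow_col1: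
  "toeplitz (zsym_pow n) i 1 = binomial_orbit (\<lambda>m. of_bool (int i = 1 - m)) n 0"
proof -
  have "toeplitz (zsym_pow n) i 1 = binomial_orbit (\<lambda>t. of_bool (t = 0)) n (0 + (int i - 1))"
    by (simp add: toeplitz_def zsym_pow_eq_binomial_orbit)
  also have "\<dots> = binomial_orbit (\<lambda>m. of_bool (m + (int i - 1) = 0)) n 0"
    by (rule binomial_orbit_shift)
  also have "\<dots> = binomial_orbit (\<lambda>m. of_bool (int i = 1 - m)) n 0"
    by (rule arg_cong[where f = "\<lambda>x. binomial_orbit x n 0"]) (auto simp: fun_eq_iff)
  finally show ?thesis .
qed

lemma coeff_h_poly:
  assumes "k \<ge> 1"
  shows "coeff (h_poly \<alpha> k) i =
    (if i = k then \<alpha> else if 1 \<le> i \<and> i < k then (\<alpha>\<^sup>2 - 1) * \<alpha> ^ (k - i - 1) else 0)"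
proof (cases "k = 1")
  case False
  have "coeff (\<Sum>j = 1..k - 1. monom (\<alpha> ^ (k - j - 1)) j) i
      = (\<Sum>j = 1..k - 1. if j = i then \<alpha> ^ (k - j - 1) else 0)"
    by (simp add: coeff_sum)
  also have "\<dots> = (if 1 \<le> i \<and> i < k then \<alpha> ^ (k - i - 1) else 0)"
    using assms by (subst sum.delta) auto
  finally have "coeff (\<Sum>j = 1..k - 1. monom (\<alpha> ^ (k - j - 1)) j) i = \<dots>" .
  then show ?thesis using False assms by (auto simp: h_poly_def)
qed (auto simp: h_poly_def)

lemma coeff_h_poly_Suc_Suc:
  assumes "k \<ge> 1" and "i \<ge> 1"
  shows "coeff (h_poly \<alpha> (Suc k)) (Suc i) = coeff (h_poly \<alpha> k) i"
  using assms by (simp add: coeff_h_poly)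

lemma coeff_h_poly_Suc_1:
  assumes "k \<ge> 2"
  shows "coeff (h_poly \<alpha> (Suc k)) 1 = \<alpha> * coeff (h_poly \<alpha> k) 1"
  using assms by (simp add: coeff_h_poly power_Suc[symmetric] Suc_diff_Suc)

definition A_apply :: "complex \<Rightarrow> (nat \<Rightarrow> complex) \<Rightarrow> nat \<Rightarrow> complex" where
  "A_apply \<alpha> v i = (if i = 1 then \<alpha> * v 1 else v (i - 1)) + v (i + 1)"

lemma A_mat_mult_eq_A_apply:
  assumes "i \<ge> 1"
  shows "(A_mat \<alpha> **\<^sub>s M) i j = A_apply \<alpha> (\<lambda>k. M k j) i"
proof (cases "i = 1")
  case True
  have "(A_mat \<alpha> **\<^sub>s M) i j = (\<Sum>\<^sub>\<infinity>k\<in>{1, 2}. A_mat \<alpha> i k * M k j)"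
    unfolding smat_mult_def
    by (rule infsum_cong_neutral) (use True in \<open>auto simp: A_mat_def toeplitz_def zsym_def\<close>)
  then show ?thesis using True by (simp add: A_mat_def A_apply_def toeplitz_def zsym_def numeral_2_eq_2)
next
  case False
  have "(A_mat \<alpha> **\<^sub>s M) i j = (\<Sum>\<^sub>\<infinity>k\<in>{i - 1, i + 1}. A_mat \<alpha> i k * M k j)"
    unfolding smat_mult_def
    by (rule infsum_cong_neutral) (use False assms in \<open>auto simp: A_mat_def toeplitz_def zsym_def\<close>)
  then show ?thesis using False assms by (simp add: A_mat_def A_apply_def toeplitz_def zsym_def)
qed

lemma A_apply_cong:
  assumes "\<And>k. k \<ge> 1 \<Longrightarrow> v k = w k" and "i \<ge> 1"
  shows "A_apply \<alpha> v i = A_apply \<alpha> w i"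
  using assms by (simp add: A_apply_def)

lemma A_apply_binomial_orbit:
  "A_apply \<alpha> (\<lambda>k. binomial_orbit (\<lambda>m. v m k) n l) i = binomial_orbit (\<lambda>m. A_apply \<alpha> (v m) i) n l"
  by (simp add: A_apply_def binomial_orbit_def sum.distrib sum_distrib_left algebra_simps)

lemma A_apply_h_poly:
  assumes "k \<ge> 2" and "i \<ge> 1"
  shows "A_apply \<alpha> (coeff (h_poly \<alpha> k)) i = coeff (h_poly \<alpha> (k - 1)) i + coeff (h_poly \<alpha> (k + 1)) i"
proof (cases "i = 1")
  case True
  have "coeff (h_poly \<alpha> k) 2 = coeff (h_poly \<alpha> (k - 1)) 1"
    using coeff_h_poly_Suc_Suc[of "k - 1" 1 \<alpha>] assms by (simp add: numeral_2_eq_2)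
  then show ?thesis
    using True coeff_h_poly_Suc_1[OF assms(1), of \<alpha>] by (simp add: A_apply_def numeral_2_eq_2)
next
  case False
  then show ?thesis
    using coeff_h_poly_Suc_Suc[of k "i - 1" \<alpha>] coeff_h_poly_Suc_Suc[of "k - 1" i \<alpha>] assms
    by (simp add: A_apply_def)
qed

text \<open>\<open>h_ext \<alpha> m\<close> is \<open>h\<^sub>m\<close> for \<open>m \<ge> 1\<close> and \<open>e\<^bsub>1-m\<^esub>\<close> for \<open>m \<le> 0\<close>, up to the unused entry at index 0
  (hit by the unit term when \<open>m = 1\<close>). Its two summands are the contributions to \<open>K\<^sub>n e\<^sub>1\<close> and to
  \<open>T((z + z\<^sup>-\<^sup>1)\<^sup>n) e\<^sub>1\<close>.\<close>

definition h_col :: "complex \<Rightarrow> int \<Rightarrow> nat \<Rightarrow> complex" where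
  "h_col \<alpha> m i = (if m \<ge> 1 then coeff (h_poly \<alpha> (nat m)) i else 0)"

definition h_ext :: "complex \<Rightarrow> int \<Rightarrow> nat \<Rightarrow> complex" where
  "h_ext \<alpha> m i = h_col \<alpha> m i + of_bool (int i = 1 - m)"

lemma h_ext_nonpos: "m \<le> 0 \<Longrightarrow> h_ext \<alpha> m i = of_bool (int i = 1 - m)"
  by (simp add: h_ext_def h_col_def)

lemma h_ext_pos: "m \<ge> 1 \<Longrightarrow> i \<ge> 1 \<Longrightarrow> h_ext \<alpha> m i = coeff (h_poly \<alpha> (nat m)) i"
  by (simp add: h_ext_def h_col_def)

lemma A_apply_h_ext:
  assumes "i \<ge> 1"
  shows "A_apply \<alpha> (h_ext \<alpha> m) i = h_ext \<alpha> (m - 1) i + h_ext \<alpha> (m + 1) i"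
proof -
  consider "m \<le> -1" | "m = 0" | "m = 1" | "m \<ge> 2"
    by linarith
  then show ?thesis
  proof cases
    case 1
    then show ?thesis using assms by (simp add: A_apply_def h_ext_nonpos)
  next
    case 2
    then show ?thesis using assms by (simp add: A_apply_def h_ext_nonpos h_ext_pos coeff_h_poly)
  next
    case 3
    have "h_ext \<alpha> 0 k = of_bool (k = 1)" for k
      by (simp add: h_ext_nonpos)
    moreover have "h_ext \<alpha> 1 k = (if k = 1 then \<alpha> else 0)" if "k \<ge> 1" for k
      using that by (simp add: h_ext_pos coeff_h_poly)
    moreover have "h_ext \<alpha> 2 k = (if k = 2 then \<alpha> else if k = 1 then \<alpha>\<^sup>2 - 1 else 0)" if "k \<ge> 1" for k
      using that by (simp add: h_ext_pos coeff_h_poly)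
    ultimately show ?thesis
      using 3 assms by (cases "i = 1") (simp_all add: A_apply_def power2_eq_square, arith)
  next
    case 4
    define k where "k = nat m"
    have k: "m = int k" "k \<ge> 2"
      using 4 by (simp_all add: k_def)
    have "A_apply \<alpha> (h_ext \<alpha> m) i = A_apply \<alpha> (coeff (h_poly \<alpha> k)) i"
      using k assms by (intro A_apply_cong) (simp_all add: h_ext_pos)
    also have "\<dots> = coeff (h_poly \<alpha> (k - 1)) i + coeff (h_poly \<alpha> (k + 1)) i"
      by (rule A_apply_h_poly[OF k(2) assms])
    also have "\<dots> = h_ext \<alpha> (m - 1) i + h_ext \<alpha> (m + 1) i"
      using k assms by (simp add: h_ext_pos nat_diff_distrib nat_add_distrib)
    finally show ?thesis .
  qed
qed

lemma smat_pow_A_mat_col1: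
  assumes "i \<ge> 1"
  shows "smat_pow (A_mat \<alpha>) n i 1 = binomial_orbit (\<lambda>m. h_ext \<alpha> m i) n 0"
  using assms
proof (induction n arbitrary: i)
  case 0
  then show ?case by (simp add: smat_id_def h_ext_def h_col_def)
next
  case (Suc n)
  have "smat_pow (A_mat \<alpha>) (Suc n) i 1 = A_apply \<alpha> (\<lambda>k. binomial_orbit (\<lambda>m. h_ext \<alpha> m k) n 0) i"
    using Suc by (simp add: A_mat_mult_eq_A_apply cong: A_apply_cong)
  also have "\<dots> = binomial_orbit (\<lambda>m. h_ext \<alpha> (m - 1) i + h_ext \<alpha> (m + 1) i) n 0"
    using Suc.prems by (simp add: A_apply_binomial_orbit A_apply_h_ext)
  also have "\<dots> = binomial_orbit (\<lambda>m. h_ext \<alpha> m i) (Suc n) 0"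
    using binomial_orbit_shift[of "\<lambda>m. h_ext \<alpha> m i" n 0 "-1"] binomial_orbit_shift[of "\<lambda>m. h_ext \<alpha> m i" n 0 1]
    by (simp add: binomial_orbit_add binomial_orbit_Suc)
  finally show ?case .
qed

lemma binomial_orbit_h_col:
  assumes "n \<ge> 1"
  shows "binomial_orbit (\<lambda>m. h_col \<alpha> m i) n 0
    = (\<Sum>j = 0..(n - 1) div 2. of_nat (n choose j) * coeff (h_poly \<alpha> (n - 2 * j)) i)"
  unfolding binomial_orbit_def
proof (rule sum.mono_neutral_cong_right)
  show "\<forall>j\<in>{0..n} - {0..(n - 1) div 2}. of_nat (n choose j) * h_col \<alpha> (0 + int n - 2 * int j) i = 0"
    by (auto simp: h_col_def)
  show "of_nat (n choose j) * h_col \<alpha> (0 + int n - 2 * int j) i = of_nat (n choose j) * coeff (h_poly \<alpha> (n - 2 * j)) i"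
    if "j \<in> {0..(n - 1) div 2}" for j
    using that assms by (auto simp: h_col_def nat_diff_distrib nat_mult_distrib)
qed auto

theorem theorem3:
  fixes \<alpha> :: complex and n :: nat
  assumes "n \<ge> 1"
  shows "\<forall>i\<ge>1. K_mat \<alpha> n i 1 =
           (\<Sum>j = 0..(n - 1) div 2. of_nat (n choose j) * coeff (h_poly \<alpha> (n - 2 * j)) i)"
proof (intro allI impI)
  fix i :: nat
  assume "i \<ge> 1"
  then have "K_mat \<alpha> n i 1 = binomial_orbit (\<lambda>m. h_ext \<alpha> m i) n 0 - toeplitz (zsym_pow n) i 1"
    unfolding K_mat_def by (simp only: smat_pow_A_mat_col1)
  also have "\<dots> = binomial_orbit (\<lambda>m. h_col \<alpha> m i) n 0"
    unfolding toeplitz_zsym_pow_col1 h_ext_def by (simp add: binomial_orbit_add)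
  also have "\<dots> = (\<Sum>j = 0..(n - 1) div 2. of_nat (n choose j) * coeff (h_poly \<alpha> (n - 2 * j)) i)"
    by (rule binomial_orbit_h_col[OF assms])
  finally show "K_mat \<alpha> n i 1 =
      (\<Sum>j = 0..(n - 1) div 2. of_nat (n choose j) * coeff (h_poly \<alpha> (n - 2 * j)) i)" .
qed

end
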